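(* Consider a stochastic block model graph with parameters $N_0,N_1\ge2$, $r,q\in(0,1)$ and label rate $\beta\in(0,1)$. Let $\sigma_1\ge0$ and $0\le\sigma_2<1$. Then with probability at least $$1-\sum_{j=0}^1N_j\left\{\exp\!\Big(-\frac{qN_{1-j}\sigma_1^2}{2(1+\frac13\sigma_1)}\Big)+3\exp\!\Big(-\frac18\beta rN_j\sigma_2^2\Big)\right\},$$ for every $j\in\{0,1\}$ and every $x_i\in\mathcal X_j$ we have $$\gamma_i\le\frac{(1+\sigma_1)qN_{1-j}}{(1+\sigma_1)qN_{1-j}+(1-\sigma_2)r(N_j-1)}\quad\text{and}\quad \beta_i\ge\frac{1-\sigma_2}{1+\sigma_2}\beta.$$
   Context: Stochastic block model (SBM): the vertex set $\mathcal X=\{x_1,\dots,x_n\}$ is partitioned as $\mathcal X=\mathcal X_0\cup\mathcal X_1$ with $|\mathcal X_0|=N_0$, $|\mathcal X_1|=N_1$, $n=N_0+N_1$ (the true label $g(x)=j$ for $x\in\mathcal X_j$). Edge weights are binary, $w_{xy}=w_{yx}\in\{0,1\}$, no self-loops, and for distinct pairs the edges are independent with $\mathbb P(w_{xy}=1)=r$ if $x,y$ lie in the same block and $\mathbb P(w_{xy}=1)=q$ if they lie in different blocks. Independently, each vertex is labeled (placed in $\Gamma$) with probability $\beta$, independently across vertices. For $x_i\in\mathcal X_j$: $$\gamma_i=\frac{\sum_{x\in\mathcal X_{1-j}}w_{x_ix}}{\sum_{x\in\mathcal X}w_{x_ix}},\qquad \beta_i=\frac{\sum_{x\in\mathcal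 X_j\cap\Gamma}w_{x_ix}}{\sum_{x\in\mathcal X_j}w_{x_ix}}.$$ *)

theory Defs
  imports "HOL-Probability.Probability"
begin

definition sbm_blk :: "nat \<Rightarrow> nat \<Rightarrow> nat" where
  "sbm_blk N0 i = (if i < N0 then 0 else 1)"

definition sbm_block :: "nat \<Rightarrow> nat \<Rightarrow> nat \<Rightarrow> nat set" where
  "sbm_block N0 N1 j = {i. i < N0 + N1 \<and> sbm_blk N0 i = j}"

definition sbm_size :: "nat \<Rightarrow> nat \<Rightarrow> nat \<Rightarrow> nat" where
  "sbm_size N0 N1 j = (if j = 0 then N0 else N1)"

text \<open>Unordered pairs of distinct vertices, represented as (i,j) with i < j.\<close>
definition sbm_pairs :: "nat \<Rightarrow> (nat \<times> nat) set" where
  "sbm_pairs n = {(i, j). i < j \<and> j < n}"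

definition sbm_edge_prob :: "nat \<Rightarrow> real \<Rightarrow> real \<Rightarrow> nat \<times> nat \<Rightarrow> real" where
  "sbm_edge_prob N0 r q e = (if sbm_blk N0 (fst e) = sbm_blk N0 (snd e) then r else q)"

text \<open>Independent edges and independent labels (membership in Gamma).\<close>
definition sbm_edges :: "nat \<Rightarrow> nat \<Rightarrow> real \<Rightarrow> real \<Rightarrow> (nat \<times> nat \<Rightarrow> bool) pmf" where
  "sbm_edges N0 N1 r q =
     Pi_pmf (sbm_pairs (N0 + N1)) False (\<lambda>e. bernoulli_pmf (sbm_edge_prob N0 r q e))"

definition sbm_labels :: "nat \<Rightarrow> nat \<Rightarrow> real \<Rightarrow> (nat \<Rightarrow> bool) pmf" where
  "sbm_labels N0 N1 \<beta> = Pi_pmf {..<N0 + N1} False (\<lambda>_. bernoulli_pmf \<beta>)"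

definition sbm_pmf :: "nat \<Rightarrow> nat \<Rightarrow> real \<Rightarrow> real \<Rightarrow> real \<Rightarrow> ((nat \<times> nat \<Rightarrow> bool) \<times> (nat \<Rightarrow> bool)) pmf" where
  "sbm_pmf N0 N1 r q \<beta> = pair_pmf (sbm_edges N0 N1 r q) (sbm_labels N0 N1 \<beta>)"

definition sbm_w :: "(nat \<times> nat \<Rightarrow> bool) \<Rightarrow> nat \<Rightarrow> nat \<Rightarrow> real" where
  "sbm_w E x y = (if x \<noteq> y \<and> E (min x y, max x y) then 1 else 0)"

definition sbm_gamma :: "nat \<Rightarrow> nat \<Rightarrow> (nat \<times> nat \<Rightarrow> bool) \<Rightarrow> nat \<Rightarrow> real" where
  "sbm_gamma N0 N1 E i =
     (\<Sum>x\<in>sbm_block N0 N1 (1 - sbm_blk N0 i). sbm_w E i x) / (\<Sum>x\<in>{..<N0 + N1}. sbm_w E i x)"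

definition sbm_beta :: "nat \<Rightarrow> nat \<Rightarrow> (nat \<times> nat \<Rightarrow> bool) \<Rightarrow> (nat \<Rightarrow> bool) \<Rightarrow> nat \<Rightarrow> real" where
  "sbm_beta N0 N1 E L i =
     (\<Sum>x\<in>{x\<in>sbm_block N0 N1 (sbm_blk N0 i). L x}. sbm_w E i x)
       / (\<Sum>x\<in>sbm_block N0 N1 (sbm_blk N0 i). sbm_w E i x)"

end

theory Submission
  imports Defs
begin

text \<open>Fix a vertex \<open>i\<close> of block \<open>j\<close>. Both \<open>\<gamma>\<^sub>i\<close> and \<open>\<beta>\<^sub>i\<close> are ratios built from three sums
  of independent indicators: the degree of \<open>i\<close> into the other block (mean \<open>q N\<^sub>1\<^sub>-\<^sub>j\<close>), its degree
  into the rest of its own block (mean \<open>r (N\<^sub>j - 1)\<close>), and its number of labeled neighbours there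
  (mean \<open>\<beta> r (N\<^sub>j - 1)\<close>, since edges and labels are independent). Multiplicative Chernoff
  bounds, in Bernstein's form for the upper tails, show that each of the four deviations that
  could spoil the two ratio bounds has probability at most one of the exponential terms; for the
  own-block terms this uses \<open>N\<^sub>j - 1 \<ge> N\<^sub>j / 2\<close> and \<open>\<beta> \<le> 1\<close>. A union bound over all vertices
  gives the theorem.\<close>

section \<open>Exponential inequalities and Chernoff bounds\<close>

lemma two_mult_power3_le_fact: "2 * 3 ^ n \<le> (fact (n + 2) :: real)"
proof (induction n)
  case (Suc n)
  have "2 * 3 ^ Suc n = 3 * (2 * 3 ^ n :: real)" by simp
  also have "\<dots> \<le> 3 * fact (n + 2)" using Suc.IH by linarith
  also have "\<dots> \<le> real (n + 3) * fact (n + 2)" by (intro mult_right_mono) auto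
  also have "\<dots> = fact (Suc n + 2)" by (simp add: ac_simps)
  finally show ?case .
qed simp

text \<open>Compare the tail of the exponential series with a geometric series of ratio \<open>x/3\<close>.\<close>
lemma exp_le_Bernstein:
  fixes x :: real
  assumes "0 \<le> x" "x < 3"
  shows "exp x \<le> 1 + x + x\<^sup>2 / (2 * (1 - x / 3))"
proof -
  define a where "a = (\<lambda>n. x ^ n / fact n)"
  have "a sums exp x" using exp_converges[of x] by (simp add: a_def field_simps)
  then have tail: "(\<lambda>n. a (n + 2)) sums (exp x - (1 + x))"
    using sums_split_initial_segment[of a "exp x" 2] by (simp add: a_def numeral_2_eq_2)
  have ratio: "norm (x / 3) < 1" using assms by simp
  have geom: "(\<lambda>n. x\<^sup>2 / 2 * (x / 3) ^ n) sums (x\<^sup>2 / 2 * (1 / (1 - x / 3)))"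
    by (intro sums_mult geometric_sums ratio)
  have "a (n + 2) \<le> x\<^sup>2 / 2 * (x / 3) ^ n" for n
  proof -
    have "a (n + 2) = x\<^sup>2 * x ^ n / fact (n + 2)" by (simp add: a_def power_add power2_eq_square mult.commute)
    also have "\<dots> \<le> x\<^sup>2 * x ^ n / (2 * 3 ^ n)"
      by (intro divide_left_mono two_mult_power3_le_fact) (use assms in auto)
    also have "\<dots> = x\<^sup>2 / 2 * (x / 3) ^ n" by (simp add: power_divide)
    finally show ?thesis .
  qed
  then have "exp x - (1 + x) \<le> x\<^sup>2 / 2 * (1 / (1 - x / 3))"
    by (intro sums_le[OF _ tail geom]) blast
  then show ?thesis by simp
qed

lemma exp_minus_le_quadratic:
  fixes x :: real
  assumes "0 \<le> x"
  shows "exp (- x) \<le> 1 - x + x\<^sup>2 / 2"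
proof -
  define g where "g t = 1 - t + t\<^sup>2 / 2 - exp (- t)" for t :: real
  have "(g has_real_derivative (t - 1 + exp (- t))) (at t)" for t
    unfolding g_def by (auto intro!: derivative_eq_intros simp: power2_eq_square algebra_simps)
  moreover have "0 \<le> t - 1 + exp (- t)" for t :: real
    using exp_ge_add_one_self[of "- t"] by simp
  ultimately have "g 0 \<le> g x"
    by (intro DERIV_nonneg_imp_nondecreasing[OF assms]) blast
  then show ?thesis by (simp add: g_def)
qed

lemma prob_ge_le_mgf:
  fixes P :: "'w pmf" and S :: "'w \<Rightarrow> real"
  assumes "0 < l" "0 \<le> c" and mgf: "(\<integral>\<^sup>+w. ennreal (exp (l * S w)) \<partial>P) \<le> ennreal c"
  shows "measure_pmf.prob P {w. t \<le> S w} \<le> exp (- l * t) * c"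
proof -
  have "emeasure P {w. t \<le> S w} \<le> ennreal (exp (- l * t)) * (\<integral>\<^sup>+w. ennreal (exp (l * S w)) \<partial>P)"
    using Chernoff_ineq_nn_integral_ge[OF \<open>0 < l\<close>, of UNIV P S t] by simp
  also have "\<dots> \<le> ennreal (exp (- l * t)) * ennreal c"
    using mgf by (rule mult_left_mono) simp
  finally have "emeasure P {w. t \<le> S w} \<le> ennreal (exp (- l * t) * c)"
    by (simp add: ennreal_mult')
  then show ?thesis
    using \<open>0 \<le> c\<close> by (simp add: measure_pmf.emeasure_eq_measure ennreal_le_iff)
qed

text \<open>The exponent \<open>l = \<sigma> / (1 + \<sigma>/3)\<close> together with \<open>exp_le_Bernstein\<close> gives Bernstein's form
  of the upper Chernoff bound.\<close>
lemma prob_ge_Chernoff_Bernstein: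
  fixes P :: "'w pmf" and S :: "'w \<Rightarrow> real"
  assumes mgf: "\<And>l. 0 < l \<Longrightarrow> (\<integral>\<^sup>+w. ennreal (exp (l * S w)) \<partial>P) \<le> ennreal (exp (\<mu> * (exp l - 1)))"
    and "0 \<le> \<mu>" "0 \<le> \<sigma>"
  shows "measure_pmf.prob P {w. (1 + \<sigma>) * \<mu> \<le> S w} \<le> exp (- (\<mu> * \<sigma>\<^sup>2) / (2 * (1 + \<sigma> / 3)))"
proof (cases "\<sigma> = 0")
  case False
  define l where "l = 3 * \<sigma> / (3 + \<sigma>)"
  have l: "0 < l" "l < 3" using assms False by (auto simp: l_def field_simps)
  have "measure_pmf.prob P {w. (1 + \<sigma>) * \<mu> \<le> S w} \<le> exp (- l * ((1 + \<sigma>) * \<mu>)) * exp (\<mu> * (exp l - 1))"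
    by (rule prob_ge_le_mgf[OF l(1) _ mgf[OF l(1)]]) simp
  also have "\<dots> = exp (- l * ((1 + \<sigma>) * \<mu>) + \<mu> * (exp l - 1))" by (rule exp_add[symmetric])
  also have "\<dots> \<le> exp (- l * ((1 + \<sigma>) * \<mu>) + \<mu> * (l + l\<^sup>2 / (2 * (1 - l / 3))))"
    using exp_le_Bernstein[of l] l \<open>0 \<le> \<mu>\<close> by (simp add: mult_left_mono)
  also have "- l * ((1 + \<sigma>) * \<mu>) + \<mu> * (l + l\<^sup>2 / (2 * (1 - l / 3))) = - (\<mu> * \<sigma>\<^sup>2) / (2 * (1 + \<sigma> / 3))"
  proof -
    have lp: "l * (3 + \<sigma>) = 3 * \<sigma>" using \<open>0 \<le> \<sigma>\<close> by (simp add: l_def)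
    have "1 - l / 3 = 3 / (3 + \<sigma>)" using \<open>0 \<le> \<sigma>\<close> by (simp add: l_def field_simps)
    then have "l\<^sup>2 / (2 * (1 - l / 3)) = l * (l * (3 + \<sigma>)) / 6" by (simp add: power2_eq_square)
    also have "\<dots> = l * \<sigma> / 2" by (simp add: lp)
    finally have h: "l\<^sup>2 / (2 * (1 - l / 3)) = l * \<sigma> / 2" .
    have "- l * ((1 + \<sigma>) * \<mu>) + \<mu> * (l + l\<^sup>2 / (2 * (1 - l / 3))) = - (\<mu> * \<sigma> * l) / 2"
      unfolding h by (simp add: algebra_simps)
    also have "\<dots> = - (\<mu> * \<sigma>\<^sup>2) / (2 * (1 + \<sigma> / 3))"
      using \<open>0 \<le> \<sigma>\<close> by (simp add: l_def field_simps power2_eq_square)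
    finally show ?thesis .
  qed
  finally show ?thesis .
next
  case True
  then show ?thesis using measure_pmf.prob_le_1[of P] by simp
qed

lemma prob_le_Chernoff:
  fixes P :: "'w pmf" and S :: "'w \<Rightarrow> real"
  assumes mgf: "\<And>l. 0 < l \<Longrightarrow> (\<integral>\<^sup>+w. ennreal (exp (- l * S w)) \<partial>P) \<le> ennreal (exp (\<mu> * (exp (- l) - 1)))"
    and "0 \<le> \<mu>" "0 \<le> \<delta>"
  shows "measure_pmf.prob P {w. S w \<le> (1 - \<delta>) * \<mu>} \<le> exp (- (\<mu> * \<delta>\<^sup>2) / 2)"
proof (cases "\<delta> = 0")
  case False
  then have \<delta>: "0 < \<delta>" using assms by simp
  have "measure_pmf.prob P {w. S w \<le> (1 - \<delta>) * \<mu>} = measure_pmf.prob P {w. - ((1 - \<delta>) * \<mu>) \<le> - S w}"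
    by simp
  also have "\<dots> \<le> exp (- \<delta> * - ((1 - \<delta>) * \<mu>)) * exp (\<mu> * (exp (- \<delta>) - 1))"
    by (rule prob_ge_le_mgf[OF \<delta>]) (use mgf[OF \<delta>] in simp_all)
  also have "\<dots> = exp (\<delta> * ((1 - \<delta>) * \<mu>) + \<mu> * (exp (- \<delta>) - 1))" by (simp flip: exp_add)
  also have "\<dots> \<le> exp (\<delta> * ((1 - \<delta>) * \<mu>) + \<mu> * (- \<delta> + \<delta>\<^sup>2 / 2))"
    using exp_minus_le_quadratic[of \<delta>] assms by (simp add: mult_left_mono)
  also have "\<delta> * ((1 - \<delta>) * \<mu>) + \<mu> * (- \<delta> + \<delta>\<^sup>2 / 2) = - (\<mu> * \<delta>\<^sup>2) / 2"
    by (simp add: field_simps power2_eq_square)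
  finally show ?thesis .
next
  case True
  then show ?thesis using measure_pmf.prob_le_1[of P] by simp
qed

section \<open>Products of independent Bernoulli variables\<close>

lemma nn_integral_Pi_pmf_prod_reindex:
  fixes \<phi> :: "'x \<Rightarrow> 'i" and h :: "'x \<Rightarrow> 'b \<Rightarrow> ennreal"
  assumes "finite I" "finite X" "inj_on \<phi> X" "\<phi> ` X \<subseteq> I"
  shows "(\<integral>\<^sup>+\<omega>. (\<Prod>x\<in>X. h x (\<omega> (\<phi> x))) \<partial>Pi_pmf I d p) = (\<Prod>x\<in>X. \<integral>\<^sup>+b. h x b \<partial>p (\<phi> x))"
proof -
  define g where "g e = (if e \<in> \<phi> ` X then h (the_inv_into X \<phi> e) else (\<lambda>_. 1))" for e
  have g_\<phi>: "g (\<phi> x) = h x" if "x \<in> X" for x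
    using that assms(3) by (simp add: g_def the_inv_into_f_f)
  have "(\<Prod>x\<in>X. h x (\<omega> (\<phi> x))) = (\<Prod>e\<in>I. g e (\<omega> e))" for \<omega>
  proof -
    have "(\<Prod>x\<in>X. h x (\<omega> (\<phi> x))) = (\<Prod>e\<in>\<phi> ` X. g e (\<omega> e))"
      using prod.reindex[OF assms(3), of "\<lambda>e. g e (\<omega> e)"] by (simp add: g_\<phi>)
    also have "\<dots> = (\<Prod>e\<in>I. g e (\<omega> e))"
      by (rule prod.mono_neutral_left[OF assms(1,4)]) (auto simp: g_def)
    finally show ?thesis .
  qed
  then have "(\<integral>\<^sup>+\<omega>. (\<Prod>x\<in>X. h x (\<omega> (\<phi> x))) \<partial>Pi_pmf I d p) = (\<Prod>e\<in>I. \<integral>\<^sup>+b. g e b \<partial>p e)"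
    by (simp add: nn_integral_prod_Pi_pmf[OF assms(1)])
  also have "\<dots> = (\<Prod>e\<in>\<phi> ` X. \<integral>\<^sup>+b. g e b \<partial>p e)"
    by (rule prod.mono_neutral_right[OF assms(1,4)]) (auto simp: g_def measure_pmf.emeasure_space_1)
  also have "\<dots> = (\<Prod>x\<in>X. \<integral>\<^sup>+b. h x b \<partial>p (\<phi> x))"
    using prod.reindex[OF assms(3), of "\<lambda>e. \<integral>\<^sup>+b. g e b \<partial>p e"] by (simp add: g_\<phi>)
  finally show ?thesis .
qed

lemma nn_integral_Pi_pmf_prod_iid:
  fixes \<phi> :: "'x \<Rightarrow> 'i" and h :: "'b \<Rightarrow> ennreal"
  assumes "finite I" "finite X" "inj_on \<phi> X" "\<phi> ` X \<subseteq> I" "\<And>x. x \<in> X \<Longrightarrow> p (\<phi> x) = p0"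
  shows "(\<integral>\<^sup>+\<omega>. (\<Prod>x\<in>X. h (\<omega> (\<phi> x))) \<partial>Pi_pmf I d p) = (\<integral>\<^sup>+b. h b \<partial>p0) ^ card X"
  using nn_integral_Pi_pmf_prod_reindex[OF assms(1-4), where h = "\<lambda>_. h"] assms(5) by simp

lemma nn_integral_bernoulli_pmf:
  assumes "0 \<le> a" "a \<le> 1"
  shows "(\<integral>\<^sup>+b. f b \<partial>bernoulli_pmf a) = f True * ennreal a + f False * ennreal (1 - a)"
  using assms by (subst nn_integral_measure_pmf_support[of UNIV]) (auto simp: UNIV_bool)

lemma bernoulli_pmf_mgf_le:
  assumes "0 \<le> a" "a \<le> 1"
  shows "(\<integral>\<^sup>+b. ennreal (exp (l * of_bool b)) \<partial>bernoulli_pmf a) \<le> ennreal (exp (a * (exp l - 1)))"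
proof -
  have "(\<integral>\<^sup>+b. ennreal (exp (l * of_bool b)) \<partial>bernoulli_pmf a) = ennreal (exp l * a + (1 - a))"
    using assms by (simp add: nn_integral_bernoulli_pmf flip: ennreal_mult' ennreal_plus)
  also have "\<dots> \<le> ennreal (exp (a * (exp l - 1)))"
    using exp_ge_add_one_self[of "a * (exp l - 1)"] by (intro ennreal_leI) (simp add: algebra_simps)
  finally show ?thesis .
qed

lemma nn_integral_bernoulli_pmf_conj:
  fixes g :: "bool \<Rightarrow> real"
  assumes "0 \<le> a" "a \<le> 1" "0 \<le> \<beta>" "\<beta> \<le> 1" "\<And>b. 0 \<le> g b"
  shows "(\<integral>\<^sup>+c. \<integral>\<^sup>+b. ennreal (g (c \<and> b)) \<partial>bernoulli_pmf \<beta> \<partial>bernoulli_pmf a)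
       = (\<integral>\<^sup>+b. ennreal (g b) \<partial>bernoulli_pmf (a * \<beta>))"
proof -
  have bern: "(\<integral>\<^sup>+b. ennreal (f b) \<partial>bernoulli_pmf t) = ennreal (f True * t + f False * (1 - t))"
    if "0 \<le> t" "t \<le> 1" "\<And>b. 0 \<le> f b" for f :: "bool \<Rightarrow> real" and t
    using that by (simp add: nn_integral_bernoulli_pmf flip: ennreal_mult' ennreal_plus)
  have inner: "(\<integral>\<^sup>+b. ennreal (g (c \<and> b)) \<partial>bernoulli_pmf \<beta>) = ennreal (g c * \<beta> + g False * (1 - \<beta>))"
    for c using assms by (subst bern) auto
  have "(\<integral>\<^sup>+c. \<integral>\<^sup>+b. ennreal (g (c \<and> b)) \<partial>bernoulli_pmf \<beta> \<partial>bernoulli_pmf a)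
      = ennreal ((g True * \<beta> + g False * (1 - \<beta>)) * a + (g False * \<beta> + g False * (1 - \<beta>)) * (1 - a))"
    unfolding inner
    by (rule bern[where f = "\<lambda>c. g c * \<beta> + g False * (1 - \<beta>)"]) (use assms in auto)
  also have "\<dots> = ennreal (g True * (a * \<beta>) + g False * (1 - a * \<beta>))"
    by (simp add: algebra_simps)
  also have "\<dots> = (\<integral>\<^sup>+b. ennreal (g b) \<partial>bernoulli_pmf (a * \<beta>))"
    using assms mult_le_one[of a \<beta>] by (subst bern) auto
  finally show ?thesis .
qed

lemma ennreal_exp_sum:
  assumes "finite X"
  shows "ennreal (exp (l * (\<Sum>x\<in>X. f x))) = (\<Prod>x\<in>X. ennreal (exp (l * f x)))"
  using assms by (simp add: sum_distrib_left exp_sum prod_ennreal)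

lemma ennreal_exp_power: "ennreal (exp c) ^ n = ennreal (exp (real n * c))"
  by (simp add: ennreal_power exp_of_nat_mult)

section \<open>Degrees in the stochastic block model\<close>

definition sbm_pair :: "nat \<Rightarrow> nat \<Rightarrow> nat \<times> nat" where
  "sbm_pair i x = (min i x, max i x)"

definition sbm_degree :: "(nat \<times> nat \<Rightarrow> bool) \<Rightarrow> nat \<Rightarrow> nat set \<Rightarrow> real" where
  "sbm_degree E i S = (\<Sum>x\<in>S. of_bool (E (sbm_pair i x)))"

definition sbm_labeled_degree :: "(nat \<times> nat \<Rightarrow> bool) \<Rightarrow> (nat \<Rightarrow> bool) \<Rightarrow> nat \<Rightarrow> nat set \<Rightarrow> real" where
  "sbm_labeled_degree E L i S = (\<Sum>x\<in>S. of_bool (E (sbm_pair i x) \<and> L x))"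

definition sbm_other_block :: "nat \<Rightarrow> nat \<Rightarrow> nat \<Rightarrow> nat set" where
  "sbm_other_block N0 N1 i = sbm_block N0 N1 (1 - sbm_blk N0 i)"

definition sbm_peers :: "nat \<Rightarrow> nat \<Rightarrow> nat \<Rightarrow> nat set" where
  "sbm_peers N0 N1 i = sbm_block N0 N1 (sbm_blk N0 i) - {i}"

lemma sbm_w_eq: "x \<noteq> i \<Longrightarrow> sbm_w E i x = of_bool (E (sbm_pair i x))"
  by (simp add: sbm_w_def sbm_pair_def)

lemma finite_sbm_block: "finite (sbm_block N0 N1 j)"
  by (rule finite_subset[of _ "{..<N0 + N1}"]) (auto simp: sbm_block_def)

lemma card_sbm_block: "j \<in> {0, 1} \<Longrightarrow> card (sbm_block N0 N1 j) = sbm_size N0 N1 j"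
proof -
  have "sbm_block N0 N1 0 = {..<N0}" "sbm_block N0 N1 1 = {N0..<N0 + N1}"
    by (auto simp: sbm_block_def sbm_blk_def)
  then show "j \<in> {0, 1} \<Longrightarrow> ?thesis" by (auto simp: sbm_size_def)
qed

lemma sbm_blocks_partition: "{..<N0 + N1} = sbm_block N0 N1 0 \<union> sbm_block N0 N1 1"
  and sbm_blocks_disjoint: "sbm_block N0 N1 0 \<inter> sbm_block N0 N1 1 = {}"
  by (auto simp: sbm_block_def sbm_blk_def)

lemma sum_vertices_by_block:
  "(\<Sum>i<N0 + N1. f (sbm_blk N0 i)) = (\<Sum>j\<in>{0::nat, 1}. real (sbm_size N0 N1 j) * f j)"
proof -
  have "(\<Sum>i<N0 + N1. f (sbm_blk N0 i))
      = (\<Sum>i\<in>sbm_block N0 N1 0. f (sbm_blk N0 i)) + (\<Sum>i\<in>sbm_block N0 N1 1. f (sbm_blk N0 i))"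
    unfolding sbm_blocks_partition by (intro sum.union_disjoint finite_sbm_block sbm_blocks_disjoint)
  also have "\<dots> = (\<Sum>i\<in>sbm_block N0 N1 0. f 0) + (\<Sum>i\<in>sbm_block N0 N1 1. f 1)"
    by (simp add: sbm_block_def)
  also have "\<dots> = (\<Sum>j\<in>{0::nat, 1}. real (sbm_size N0 N1 j) * f j)"
    by (simp add: card_sbm_block)
  finally show ?thesis .
qed

lemma sbm_other_block_subset: "i < N0 + N1 \<Longrightarrow> sbm_other_block N0 N1 i \<subseteq> {..<N0 + N1} - {i}"
  by (auto simp: sbm_other_block_def sbm_block_def sbm_blk_def)

lemma sbm_peers_subset: "sbm_peers N0 N1 i \<subseteq> {..<N0 + N1} - {i}"
  by (auto simp: sbm_peers_def sbm_block_def)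

lemma sbm_edge_prob_other_block:
  "x \<in> sbm_other_block N0 N1 i \<Longrightarrow> sbm_edge_prob N0 r q (sbm_pair i x) = q"
  by (auto simp: sbm_other_block_def sbm_block_def sbm_blk_def sbm_edge_prob_def sbm_pair_def min_def max_def)

lemma sbm_edge_prob_peers: "x \<in> sbm_peers N0 N1 i \<Longrightarrow> sbm_edge_prob N0 r q (sbm_pair i x) = r"
  by (auto simp: sbm_peers_def sbm_block_def sbm_blk_def sbm_edge_prob_def sbm_pair_def min_def max_def)

lemma card_sbm_other_block: "card (sbm_other_block N0 N1 i) = sbm_size N0 N1 (1 - sbm_blk N0 i)"
  unfolding sbm_other_block_def by (rule card_sbm_block) (simp add: sbm_blk_def)

lemma card_sbm_peers:
  assumes "i < N0 + N1" "N0 \<ge> 1" "N1 \<ge> 1"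
  shows "real (card (sbm_peers N0 N1 i)) = real (sbm_size N0 N1 (sbm_blk N0 i)) - 1"
proof -
  have "i \<in> sbm_block N0 N1 (sbm_blk N0 i)" using assms(1) by (simp add: sbm_block_def)
  moreover have "sbm_size N0 N1 (sbm_blk N0 i) \<ge> 1" using assms by (simp add: sbm_size_def)
  ultimately show ?thesis
    using card_sbm_block[of "sbm_blk N0 i" N0 N1] finite_sbm_block[of N0 N1]
    by (simp add: sbm_peers_def sbm_blk_def of_nat_diff)
qed

lemma sum_sbm_w_eq_degree: "i \<notin> S \<Longrightarrow> (\<Sum>x\<in>S. sbm_w E i x) = sbm_degree E i S"
  unfolding sbm_degree_def by (intro sum.cong refl sbm_w_eq) auto

lemma sum_sbm_w_own_block:
  assumes "i < N0 + N1"
  shows "(\<Sum>x\<in>sbm_block N0 N1 (sbm_blk N0 i). sbm_w E i x) = sbm_degree E i (sbm_peers N0 N1 i)"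
proof -
  have "i \<in> sbm_block N0 N1 (sbm_blk N0 i)" using assms by (simp add: sbm_block_def)
  then have "(\<Sum>x\<in>sbm_block N0 N1 (sbm_blk N0 i). sbm_w E i x) = sbm_w E i i + (\<Sum>x\<in>sbm_peers N0 N1 i. sbm_w E i x)"
    unfolding sbm_peers_def by (simp add: sum.remove finite_sbm_block)
  moreover have "sbm_w E i i = 0" by (simp add: sbm_w_def)
  moreover have "i \<notin> sbm_peers N0 N1 i" by (simp add: sbm_peers_def)
  ultimately show ?thesis by (simp add: sum_sbm_w_eq_degree)
qed

lemma sbm_gamma_eq:
  assumes "i < N0 + N1"
  shows "sbm_gamma N0 N1 E i = sbm_degree E i (sbm_other_block N0 N1 i)
     / (sbm_degree E i (sbm_other_block N0 N1 i) + sbm_degree E i (sbm_peers N0 N1 i))"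
proof -
  have "{..<N0 + N1} = sbm_block N0 N1 (sbm_blk N0 i) \<union> sbm_other_block N0 N1 i"
    "sbm_block N0 N1 (sbm_blk N0 i) \<inter> sbm_other_block N0 N1 i = {}"
    by (auto simp: sbm_other_block_def sbm_block_def sbm_blk_def)
  then have "(\<Sum>x<N0 + N1. sbm_w E i x)
      = (\<Sum>x\<in>sbm_block N0 N1 (sbm_blk N0 i). sbm_w E i x) + (\<Sum>x\<in>sbm_other_block N0 N1 i. sbm_w E i x)"
    by (simp add: sum.union_disjoint finite_sbm_block sbm_other_block_def)
  moreover have "i \<notin> sbm_other_block N0 N1 i"
    by (auto simp: sbm_other_block_def sbm_block_def sbm_blk_def)
  ultimately show ?thesis
    using assms by (simp add: sbm_gamma_def sbm_other_block_def sum_sbm_w_own_block sum_sbm_w_eq_degree add.commute)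
qed

lemma sbm_beta_eq:
  assumes "i < N0 + N1"
  shows "sbm_beta N0 N1 E L i = sbm_labeled_degree E L i (sbm_peers N0 N1 i) / sbm_degree E i (sbm_peers N0 N1 i)"
proof -
  let ?B = "sbm_block N0 N1 (sbm_blk N0 i)"
  have "i \<in> ?B" using assms by (simp add: sbm_block_def)
  have "(\<Sum>x\<in>{x\<in>?B. L x}. sbm_w E i x) = (\<Sum>x\<in>?B. if L x then sbm_w E i x else 0)"
    by (simp add: sum.inter_filter finite_sbm_block)
  also have "\<dots> = (\<Sum>x\<in>sbm_peers N0 N1 i. if L x then sbm_w E i x else 0)"
    using \<open>i \<in> ?B\<close> by (simp add: sbm_peers_def sum.remove finite_sbm_block sbm_w_def)
  also have "\<dots> = sbm_labeled_degree E L i (sbm_peers N0 N1 i)"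
    unfolding sbm_labeled_degree_def by (intro sum.cong) (auto simp: sbm_peers_def sbm_w_eq)
  finally show ?thesis
    using assms by (simp add: sbm_beta_def sum_sbm_w_own_block)
qed

lemma sbm_edges_prod_iid:
  assumes "i < N0 + N1" "S \<subseteq> {..<N0 + N1} - {i}"
    and "\<And>x. x \<in> S \<Longrightarrow> sbm_edge_prob N0 r q (sbm_pair i x) = a"
  shows "(\<integral>\<^sup>+E. (\<Prod>x\<in>S. h (E (sbm_pair i x))) \<partial>sbm_edges N0 N1 r q) = (\<integral>\<^sup>+b. h b \<partial>bernoulli_pmf a) ^ card S"
  unfolding sbm_edges_def
proof (rule nn_integral_Pi_pmf_prod_iid)
  show "finite (sbm_pairs (N0 + N1))"
    by (rule finite_subset[of _ "{..<N0 + N1} \<times> {..<N0 + N1}"]) (auto simp: sbm_pairs_def)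
  show "finite S" using assms(2) by (rule finite_subset) auto
  show "inj_on (sbm_pair i) S"
    using assms(2) by (intro inj_onI) (auto simp: sbm_pair_def min_def max_def split: if_splits)
  show "sbm_pair i ` S \<subseteq> sbm_pairs (N0 + N1)"
    using assms(1,2) by (auto simp: sbm_pair_def sbm_pairs_def min_def max_def subset_iff)
qed (use assms(3) in simp)

lemma sbm_degree_mgf_le:
  assumes "i < N0 + N1" "S \<subseteq> {..<N0 + N1} - {i}"
    and "\<And>x. x \<in> S \<Longrightarrow> sbm_edge_prob N0 r q (sbm_pair i x) = a" and "0 \<le> a" "a \<le> 1"
  shows "(\<integral>\<^sup>+w. ennreal (exp (l * sbm_degree (fst w) i S)) \<partial>sbm_pmf N0 N1 r q \<beta>)
     \<le> ennreal (exp (real (card S) * a * (exp l - 1)))"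
proof -
  have "finite S" using assms(2) by (rule finite_subset) auto
  have "(\<integral>\<^sup>+w. ennreal (exp (l * sbm_degree (fst w) i S)) \<partial>sbm_pmf N0 N1 r q \<beta>)
      = (\<integral>\<^sup>+E. (\<Prod>x\<in>S. ennreal (exp (l * of_bool (E (sbm_pair i x))))) \<partial>sbm_edges N0 N1 r q)"
    unfolding sbm_pmf_def sbm_degree_def
    by (simp add: nn_integral_pair_pmf' measure_pmf.emeasure_space_1 ennreal_exp_sum[OF \<open>finite S\<close>])
  also have "\<dots> = (\<integral>\<^sup>+b. ennreal (exp (l * of_bool b)) \<partial>bernoulli_pmf a) ^ card S"
    by (rule sbm_edges_prod_iid[OF assms(1-3)])
  also have "\<dots> \<le> ennreal (exp (a * (exp l - 1))) ^ card S"
    by (intro power_mono bernoulli_pmf_mgf_le assms(4,5)) simp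
  also have "\<dots> = ennreal (exp (real (card S) * a * (exp l - 1)))"
    by (simp add: ennreal_exp_power mult.assoc)
  finally show ?thesis .
qed

lemma sbm_labeled_degree_mgf_le:
  assumes "i < N0 + N1" "S \<subseteq> {..<N0 + N1} - {i}"
    and "\<And>x. x \<in> S \<Longrightarrow> sbm_edge_prob N0 r q (sbm_pair i x) = a" and "0 \<le> a" "a \<le> 1"
    and "0 \<le> \<beta>" "\<beta> \<le> 1"
  shows "(\<integral>\<^sup>+w. ennreal (exp (l * sbm_labeled_degree (fst w) (snd w) i S)) \<partial>sbm_pmf N0 N1 r q \<beta>)
     \<le> ennreal (exp (real (card S) * (a * \<beta>) * (exp l - 1)))"
proof -
  have "finite S" using assms(2) by (rule finite_subset) auto
  define k where "k c = (\<integral>\<^sup>+b. ennreal (exp (l * of_bool (c \<and> b))) \<partial>bernoulli_pmf \<beta>)" for c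
  have labels: "(\<integral>\<^sup>+L. (\<Prod>x\<in>S. ennreal (exp (l * of_bool (E (sbm_pair i x) \<and> L x)))) \<partial>sbm_labels N0 N1 \<beta>)
      = (\<Prod>x\<in>S. k (E (sbm_pair i x)))" for E
    unfolding sbm_labels_def k_def
    using nn_integral_Pi_pmf_prod_reindex[where I = "{..<N0 + N1}" and X = S and \<phi> = "\<lambda>x. x"
        and h = "\<lambda>x b. ennreal (exp (l * of_bool (E (sbm_pair i x) \<and> b)))"
        and d = False and p = "\<lambda>_. bernoulli_pmf \<beta>"] assms(2) \<open>finite S\<close>
    by auto
  have "(\<integral>\<^sup>+w. ennreal (exp (l * sbm_labeled_degree (fst w) (snd w) i S)) \<partial>sbm_pmf N0 N1 r q \<beta>)
      = (\<integral>\<^sup>+E. (\<Prod>x\<in>S. k (E (sbm_pair i x))) \<partial>sbm_edges N0 N1 r q)"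
    unfolding sbm_pmf_def sbm_labeled_degree_def nn_integral_pair_pmf'
    by (simp add: ennreal_exp_sum[OF \<open>finite S\<close>] labels)
  also have "\<dots> = (\<integral>\<^sup>+c. k c \<partial>bernoulli_pmf a) ^ card S"
    by (rule sbm_edges_prod_iid[OF assms(1-3)])
  also have "\<dots> = (\<integral>\<^sup>+b. ennreal (exp (l * of_bool b)) \<partial>bernoulli_pmf (a * \<beta>)) ^ card S"
    unfolding k_def using nn_integral_bernoulli_pmf_conj[OF assms(4-7), of "\<lambda>b. exp (l * of_bool b)"]
    by simp
  also have "\<dots> \<le> ennreal (exp ((a * \<beta>) * (exp l - 1))) ^ card S"
    using assms(4-7) mult_le_one[of a \<beta>] by (intro power_mono bernoulli_pmf_mgf_le) auto
  also have "\<dots> = ennreal (exp (real (card S) * (a * \<beta>) * (exp l - 1)))"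
    by (simp add: ennreal_exp_power mult.assoc)
  finally show ?thesis .
qed

lemma prob_sbm_degree_ge:
  assumes "i < N0 + N1" "S \<subseteq> {..<N0 + N1} - {i}"
    and "\<And>x. x \<in> S \<Longrightarrow> sbm_edge_prob N0 r q (sbm_pair i x) = a" and "0 \<le> a" "a \<le> 1" "0 \<le> \<sigma>"
  shows "measure_pmf.prob (sbm_pmf N0 N1 r q \<beta>) {w. (1 + \<sigma>) * (real (card S) * a) \<le> sbm_degree (fst w) i S}
     \<le> exp (- (real (card S) * a * \<sigma>\<^sup>2) / (2 * (1 + \<sigma> / 3)))"
  by (rule prob_ge_Chernoff_Bernstein[OF sbm_degree_mgf_le[OF assms(1-5)]]) (use assms in simp_all)

lemma prob_sbm_degree_le:
  assumes "i < N0 + N1" "S \<subseteq> {..<N0 + N1} - {i}"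
    and "\<And>x. x \<in> S \<Longrightarrow> sbm_edge_prob N0 r q (sbm_pair i x) = a" and "0 \<le> a" "a \<le> 1" "0 \<le> \<delta>"
  shows "measure_pmf.prob (sbm_pmf N0 N1 r q \<beta>) {w. sbm_degree (fst w) i S \<le> (1 - \<delta>) * (real (card S) * a)}
     \<le> exp (- (real (card S) * a * \<delta>\<^sup>2) / 2)"
  by (rule prob_le_Chernoff[OF sbm_degree_mgf_le[OF assms(1-5)]]) (use assms in simp_all)

lemma prob_sbm_labeled_degree_le:
  assumes "i < N0 + N1" "S \<subseteq> {..<N0 + N1} - {i}"
    and "\<And>x. x \<in> S \<Longrightarrow> sbm_edge_prob N0 r q (sbm_pair i x) = a" and "0 \<le> a" "a \<le> 1"
    and "0 \<le> \<beta>" "\<beta> \<le> 1" "0 \<le> \<delta>"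
  shows "measure_pmf.prob (sbm_pmf N0 N1 r q \<beta>)
       {w. sbm_labeled_degree (fst w) (snd w) i S \<le> (1 - \<delta>) * (real (card S) * (a * \<beta>))}
     \<le> exp (- (real (card S) * (a * \<beta>) * \<delta>\<^sup>2) / 2)"
  by (rule prob_le_Chernoff[OF sbm_labeled_degree_mgf_le[OF assms(1-7)]]) (use assms in simp_all)

section \<open>Concentration at a single vertex\<close>

definition sbm_failure ::
    "nat \<Rightarrow> nat \<Rightarrow> real \<Rightarrow> real \<Rightarrow> real \<Rightarrow> real \<Rightarrow> real \<Rightarrow> nat \<Rightarrow> ((nat \<times> nat \<Rightarrow> bool) \<times> (nat \<Rightarrow> bool)) set"
  where "sbm_failure N0 N1 r q \<beta> \<sigma>1 \<sigma>2 i =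
    {w. (1 + \<sigma>1) * (real (card (sbm_other_block N0 N1 i)) * q) \<le> sbm_degree (fst w) i (sbm_other_block N0 N1 i)}
  \<union> {w. sbm_degree (fst w) i (sbm_peers N0 N1 i) \<le> (1 - \<sigma>2) * (real (card (sbm_peers N0 N1 i)) * r)}
  \<union> {w. (1 + \<sigma>2) * (real (card (sbm_peers N0 N1 i)) * r) \<le> sbm_degree (fst w) i (sbm_peers N0 N1 i)}
  \<union> {w. sbm_labeled_degree (fst w) (snd w) i (sbm_peers N0 N1 i)
        \<le> (1 - \<sigma>2) * (real (card (sbm_peers N0 N1 i)) * (r * \<beta>))}"

definition sbm_vertex_bound :: "nat \<Rightarrow> nat \<Rightarrow> real \<Rightarrow> real \<Rightarrow> real \<Rightarrow> real \<Rightarrow> real \<Rightarrow> nat \<Rightarrow> real" where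
  "sbm_vertex_bound N0 N1 r q \<beta> \<sigma>1 \<sigma>2 j =
     exp (- (q * real (sbm_size N0 N1 (1 - j)) * \<sigma>1\<^sup>2) / (2 * (1 + \<sigma>1 / 3)))
     + 3 * exp (- (1/8) * \<beta> * r * real (sbm_size N0 N1 j) * \<sigma>2\<^sup>2)"

lemma ratio_le_of_bounds:
  fixes x y A B :: real
  assumes "0 \<le> x" "x \<le> A" "B \<le> y" "0 \<le> B" "0 < A + B"
  shows "x / (x + y) \<le> A / (A + B)"
proof (cases "x = 0")
  case False
  then have "x / (x + y) \<le> A / (A + y)"
    using assms by (simp add: divide_simps) (simp add: algebra_simps mult_right_mono)
  also have "\<dots> \<le> A / (A + B)"
    using assms False by (intro divide_left_mono) auto
  finally show ?thesis .
qed (use assms in simp)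

lemma sbm_gamma_le_of_not_failure:
  assumes "i \<in> sbm_block N0 N1 j" "N0 \<ge> 2" "N1 \<ge> 2" "0 < r" "0 < q" "\<sigma>1 \<ge> 0" "\<sigma>2 < 1"
    and "(E, L) \<notin> sbm_failure N0 N1 r q \<beta> \<sigma>1 \<sigma>2 i"
  shows "sbm_gamma N0 N1 E i \<le>
          (1 + \<sigma>1) * q * real (sbm_size N0 N1 (1 - j)) /
          ((1 + \<sigma>1) * q * real (sbm_size N0 N1 (1 - j)) + (1 - \<sigma>2) * r * (real (sbm_size N0 N1 j) - 1))"
proof -
  from assms(1) have i: "i < N0 + N1" and j: "sbm_blk N0 i = j" by (auto simp: sbm_block_def)
  define m where "m = real (sbm_size N0 N1 j) - 1"
  define n where "n = real (sbm_size N0 N1 (1 - j))"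
  have "1 \<le> m" using assms(2,3) by (simp add: m_def sbm_size_def)
  have "real (card (sbm_peers N0 N1 i)) = m" "real (card (sbm_other_block N0 N1 i)) = n"
    using card_sbm_peers[OF i] card_sbm_other_block[of N0 N1 i] assms(2,3) j by (simp_all add: m_def n_def)
  then have "sbm_degree E i (sbm_other_block N0 N1 i) \<le> (1 + \<sigma>1) * q * n"
    and "(1 - \<sigma>2) * r * m \<le> sbm_degree E i (sbm_peers N0 N1 i)"
    using assms(8) by (auto simp: sbm_failure_def algebra_simps)
  moreover have "0 \<le> sbm_degree E i (sbm_other_block N0 N1 i)"
    unfolding sbm_degree_def by (rule sum_nonneg) simp
  moreover have "0 < (1 - \<sigma>2) * r * m" using assms \<open>1 \<le> m\<close> by simp
  ultimately show ?thesis
    unfolding sbm_gamma_eq[OF i] m_def[symmetric] n_def[symmetric] using assms(5,6)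
    by (intro ratio_le_of_bounds) (auto simp: n_def)
qed

lemma sbm_beta_ge_of_not_failure:
  assumes "i \<in> sbm_block N0 N1 j" "N0 \<ge> 2" "N1 \<ge> 2" "0 < r" "0 < \<beta>" "0 \<le> \<sigma>2" "\<sigma>2 < 1"
    and "(E, L) \<notin> sbm_failure N0 N1 r q \<beta> \<sigma>1 \<sigma>2 i"
  shows "sbm_beta N0 N1 E L i \<ge> (1 - \<sigma>2) / (1 + \<sigma>2) * \<beta>"
proof -
  from assms(1) have i: "i < N0 + N1" by (simp add: sbm_block_def)
  define m where "m = real (card (sbm_peers N0 N1 i))"
  let ?peer = "sbm_degree E i (sbm_peers N0 N1 i)"
  let ?lab = "sbm_labeled_degree E L i (sbm_peers N0 N1 i)"
  have "1 \<le> m" using card_sbm_peers[OF i] assms(2,3) by (simp add: m_def sbm_size_def)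
  have peer: "?peer \<le> (1 + \<sigma>2) * (m * r)" and lab: "(1 - \<sigma>2) * (m * (r * \<beta>)) \<le> ?lab"
    using assms(8) by (auto simp: sbm_failure_def m_def)
  have "?lab \<le> ?peer"
    unfolding sbm_labeled_degree_def sbm_degree_def by (intro sum_mono) simp
  have "0 < (1 - \<sigma>2) * (m * (r * \<beta>))" using assms \<open>1 \<le> m\<close> by simp
  then have "0 < ?lab" using lab by linarith
  have "m * r \<noteq> 0" using assms \<open>1 \<le> m\<close> by simp
  then have "(1 - \<sigma>2) / (1 + \<sigma>2) * \<beta> = (1 - \<sigma>2) * \<beta> * (m * r) / ((1 + \<sigma>2) * (m * r))"
    by simp
  also have "\<dots> = (1 - \<sigma>2) * (m * (r * \<beta>)) / ((1 + \<sigma>2) * (m * r))"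
    by (simp add: ac_simps)
  also have "\<dots> \<le> ?lab / ((1 + \<sigma>2) * (m * r))"
    using lab assms \<open>1 \<le> m\<close> by (intro divide_right_mono) auto
  also have "\<dots> \<le> ?lab / ?peer"
    using peer \<open>0 < ?lab\<close> \<open>?lab \<le> ?peer\<close> by (intro divide_left_mono) auto
  finally show ?thesis
    by (simp add: sbm_beta_eq[OF i])
qed

lemma exp_peer_exponents_le:
  fixes \<beta> r s \<sigma> :: real
  assumes "2 \<le> s" "0 \<le> \<beta>" "\<beta> \<le> 1" "0 \<le> r" "0 \<le> \<sigma>" "\<sigma> \<le> 3"
  shows "exp (- ((s - 1) * r * \<sigma>\<^sup>2) / 2) \<le> exp (- (1/8) * \<beta> * r * s * \<sigma>\<^sup>2)"
    and "exp (- ((s - 1) * r * \<sigma>\<^sup>2) / (2 * (1 + \<sigma> / 3))) \<le> exp (- (1/8) * \<beta> * r * s * \<sigma>\<^sup>2)"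
    and "exp (- ((s - 1) * (r * \<beta>) * \<sigma>\<^sup>2) / 2) \<le> exp (- (1/8) * \<beta> * r * s * \<sigma>\<^sup>2)"
proof -
  have "\<beta> * (r * \<sigma>\<^sup>2) * s \<le> 1 * (r * \<sigma>\<^sup>2) * s"
    using assms by (intro mult_right_mono) auto
  moreover have "s * (r * \<sigma>\<^sup>2) \<le> 2 * (s - 1) * (r * \<sigma>\<^sup>2)"
    using assms by (intro mult_right_mono) auto
  moreover have "s * (\<beta> * r * \<sigma>\<^sup>2) \<le> 2 * (s - 1) * (\<beta> * r * \<sigma>\<^sup>2)"
    using assms by (intro mult_right_mono) auto
  ultimately have *: "\<beta> * r * s * \<sigma>\<^sup>2 / 8 \<le> (s - 1) * r * \<sigma>\<^sup>2 / 4"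
    "\<beta> * r * s * \<sigma>\<^sup>2 / 8 \<le> (s - 1) * (r * \<beta>) * \<sigma>\<^sup>2 / 4"
    by (simp_all add: algebra_simps)
  have "(s - 1) * r * \<sigma>\<^sup>2 / 4 \<le> (s - 1) * r * \<sigma>\<^sup>2 / (2 * (1 + \<sigma> / 3))"
    using assms by (intro divide_left_mono) auto
  moreover have "0 \<le> (s - 1) * r * \<sigma>\<^sup>2" "0 \<le> (s - 1) * (r * \<beta>) * \<sigma>\<^sup>2"
    using assms by simp_all
  ultimately show "exp (- ((s - 1) * r * \<sigma>\<^sup>2) / 2) \<le> exp (- (1/8) * \<beta> * r * s * \<sigma>\<^sup>2)"
    and "exp (- ((s - 1) * r * \<sigma>\<^sup>2) / (2 * (1 + \<sigma> / 3))) \<le> exp (- (1/8) * \<beta> * r * s * \<sigma>\<^sup>2)"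
    and "exp (- ((s - 1) * (r * \<beta>) * \<sigma>\<^sup>2) / 2) \<le> exp (- (1/8) * \<beta> * r * s * \<sigma>\<^sup>2)"
    using * by (simp_all only: exp_le_cancel_iff)
qed

lemma prob_sbm_failure_le:
  assumes "i < N0 + N1" "N0 \<ge> 2" "N1 \<ge> 2" "0 < r" "r < 1" "0 < q" "q < 1" "0 < \<beta>" "\<beta> < 1"
    and "\<sigma>1 \<ge> 0" "0 \<le> \<sigma>2" "\<sigma>2 < 1"
  shows "measure_pmf.prob (sbm_pmf N0 N1 r q \<beta>) (sbm_failure N0 N1 r q \<beta> \<sigma>1 \<sigma>2 i)
     \<le> sbm_vertex_bound N0 N1 r q \<beta> \<sigma>1 \<sigma>2 (sbm_blk N0 i)"
proof -
  let ?P = "measure_pmf.prob (sbm_pmf N0 N1 r q \<beta>)"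
  let ?Out = "sbm_other_block N0 N1 i" and ?Peers = "sbm_peers N0 N1 i"
  define s where "s = real (sbm_size N0 N1 (sbm_blk N0 i))"
  define T where "T = exp (- (1/8) * \<beta> * r * s * \<sigma>2\<^sup>2)"
  have "2 \<le> s" using assms(2,3) by (simp add: s_def sbm_size_def)
  have card_peers: "real (card ?Peers) = s - 1"
    using card_sbm_peers[of i N0 N1] assms(1-3) by (simp add: s_def)
  note exponents = exp_peer_exponents_le[OF \<open>2 \<le> s\<close>, of \<beta> r \<sigma>2, folded T_def]
  let ?A1 = "{w. (1 + \<sigma>1) * (real (card ?Out) * q) \<le> sbm_degree (fst w) i ?Out}"
  let ?A2 = "{w. sbm_degree (fst w) i ?Peers \<le> (1 - \<sigma>2) * (real (card ?Peers) * r)}"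
  let ?A3 = "{w. (1 + \<sigma>2) * (real (card ?Peers) * r) \<le> sbm_degree (fst w) i ?Peers}"
  let ?A4 = "{w. sbm_labeled_degree (fst w) (snd w) i ?Peers \<le> (1 - \<sigma>2) * (real (card ?Peers) * (r * \<beta>))}"
  have union: "?P (A \<union> B) \<le> ?P A + ?P B" for A B
    by (rule measure_Un_le) auto
  have "?P (sbm_failure N0 N1 r q \<beta> \<sigma>1 \<sigma>2 i) \<le> ?P ?A1 + ?P ?A2 + ?P ?A3 + ?P ?A4"
    unfolding sbm_failure_def
    using union[of "?A1 \<union> ?A2 \<union> ?A3" ?A4] union[of "?A1 \<union> ?A2" ?A3] union[of ?A1 ?A2] by linarith
  also have "\<dots> \<le> exp (- (q * real (sbm_size N0 N1 (1 - sbm_blk N0 i)) * \<sigma>1\<^sup>2) / (2 * (1 + \<sigma>1 / 3))) + T + T + T"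
  proof (intro add_mono)
    show "?P ?A1 \<le> exp (- (q * real (sbm_size N0 N1 (1 - sbm_blk N0 i)) * \<sigma>1\<^sup>2) / (2 * (1 + \<sigma>1 / 3)))"
      using prob_sbm_degree_ge[OF assms(1) sbm_other_block_subset[OF assms(1)]
          sbm_edge_prob_other_block[of _ N0 N1 i r q], where \<sigma> = \<sigma>1 and \<beta> = \<beta>] assms
      by (simp add: card_sbm_other_block mult.commute)
    show "?P ?A2 \<le> T"
      using prob_sbm_degree_le[OF assms(1) sbm_peers_subset[of N0 N1 i] sbm_edge_prob_peers[of _ N0 N1 i r q],
          where \<delta> = \<sigma>2 and \<beta> = \<beta>] exponents(1) assms
      by (simp add: card_peers)
    show "?P ?A3 \<le> T"
      using prob_sbm_degree_ge[OF assms(1) sbm_peers_subset[of N0 N1 i] sbm_edge_prob_peers[of _ N0 N1 i r q],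
          where \<sigma> = \<sigma>2 and \<beta> = \<beta>] exponents(2) assms
      by (simp add: card_peers)
    show "?P ?A4 \<le> T"
      using prob_sbm_labeled_degree_le[OF assms(1) sbm_peers_subset[of N0 N1 i] sbm_edge_prob_peers[of _ N0 N1 i r q],
          where \<delta> = \<sigma>2 and \<beta> = \<beta>] exponents(3) assms
      by (simp add: card_peers)
  qed
  also have "\<dots> = sbm_vertex_bound N0 N1 r q \<beta> \<sigma>1 \<sigma>2 (sbm_blk N0 i)"
    by (simp add: sbm_vertex_bound_def T_def s_def)
  finally show ?thesis .
qed

theorem mainTheorem10:
  fixes N0 N1 :: nat and r q \<beta> \<sigma>1 \<sigma>2 :: real
  assumes "N0 \<ge> 2" "N1 \<ge> 2"
    and "0 < r" "r < 1" "0 < q" "q < 1" "0 < \<beta>" "\<beta> < 1"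
    and "\<sigma>1 \<ge> 0" "0 \<le> \<sigma>2" "\<sigma>2 < 1"
  shows "measure_pmf.prob (sbm_pmf N0 N1 r q \<beta>)
     {(E, L). \<forall>j\<in>{0::nat, 1}. \<forall>i\<in>sbm_block N0 N1 j.
        sbm_gamma N0 N1 E i \<le>
          (1 + \<sigma>1) * q * real (sbm_size N0 N1 (1 - j)) /
          ((1 + \<sigma>1) * q * real (sbm_size N0 N1 (1 - j)) + (1 - \<sigma>2) * r * (real (sbm_size N0 N1 j) - 1))
        \<and> sbm_beta N0 N1 E L i \<ge> (1 - \<sigma>2) / (1 + \<sigma>2) * \<beta>}
   \<ge> 1 - (\<Sum>j\<in>{0::nat, 1}. real (sbm_size N0 N1 j) *
        (exp (- (q * real (sbm_size N0 N1 (1 - j)) * \<sigma>1\<^sup>2) / (2 * (1 + \<sigma>1 / 3)))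
         + 3 * exp (- (1/8) * \<beta> * r * real (sbm_size N0 N1 j) * \<sigma>2\<^sup>2)))"
  (is "measure_pmf.prob ?M ?G \<ge> 1 - ?S")
proof -
  let ?P = "measure_pmf.prob ?M"
  let ?F = "sbm_failure N0 N1 r q \<beta> \<sigma>1 \<sigma>2"
  have "(E, L) \<in> ?G" if "(E, L) \<notin> (\<Union>i<N0 + N1. ?F i)" for E L
    unfolding mem_Collect_eq prod.case using that
    by (intro ballI conjI sbm_gamma_le_of_not_failure[OF _ assms(1,2,3,5,9,11)]
        sbm_beta_ge_of_not_failure[OF _ assms(1,2,3,7,10,11)]) (auto simp: sbm_block_def)
  then have "?P (UNIV - ?G) \<le> ?P (\<Union>i<N0 + N1. ?F i)"
    by (intro measure_pmf.finite_measure_mono) auto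
  also have "\<dots> \<le> (\<Sum>i<N0 + N1. ?P (?F i))"
    by (intro measure_pmf.finite_measure_subadditive_finite) auto
  also have "\<dots> \<le> (\<Sum>i<N0 + N1. sbm_vertex_bound N0 N1 r q \<beta> \<sigma>1 \<sigma>2 (sbm_blk N0 i))"
    by (intro sum_mono prob_sbm_failure_le assms) simp
  also have "\<dots> = ?S"
    unfolding sum_vertices_by_block by (simp add: sbm_vertex_bound_def)
  finally show ?thesis
    using measure_pmf.prob_compl[of ?G "sbm_pmf N0 N1 r q \<beta>"] by simp
qed

end
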